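(* Let $\varphi:\mathbb{R}^n\to\mathbb{R}$ be of class $\mathcal C^{1,1}$ on a neighborhood of $\bar x$, where $\bar x$ is a tilt-stable local minimizer of $\varphi$ with modulus $\kappa>0$, and suppose there is $\delta>0$ such that for every $(x,v)\in\operatorname{gph}\nabla\varphi\cap\mathbb B_\delta(\bar x,0)$ the function $\varphi$ is twice epi-differentiable at $x$ for $v=\nabla\varphi(x)$. Then for every $x$ sufficiently close to $\bar x$, the problem $$\text{minimize}\ \ \varphi(x)+\langle\nabla\varphi(x),w\rangle+\tfrac12{\rm d}^2\varphi(x,\nabla\varphi(x))(w)\quad\text{over } w\in\mathbb{R}^n$$ admits a unique optimal solution.
   Context: $\mathcal C^{1,1}$ near $\bar x$: differentiable with locally Lipschitz gradient near $\bar x$. Second subderivative: ${\rm d}^2\varphi(x,v)(w)=\liminf_{t\downarrow0,w'\to w}\Delta_t^2\varphi(x,v)(w')$, where $\Delta_t^2\varphi(x,v)(w')=\frac{\varphi(x+tw')-\varphi(x)-t\langle v,w'\rangle}{t^2/2}$. $\varphi$ is twice epi-differentiable at $x$ for $v$ if for every $w$ and every $t_k\downarrow0$ there exists $w_k\to w$ with $\Delta_{t_k}^2\varphi(x,v)(w_k)\to{\rm d}^2\varphi(x,v)(w)$. $\bar x$ is a tilt-stable local minimizer of $\varphi$ with modulus $\kappa>0$ if for some $\gamma>0$ the mapping $M_\gamma(v)=\operatorname{argmin}\{\varphi(x)-\langle v,x\rangle:x\in\mathbb B_\gamma(\bar x)\}$ is single-valued and Lipschitz continuous with constant $\kappa$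 on a neighborhood of $0$, with $M_\gamma(0)=\{\bar x\}$. *)

theory Defs
  imports "HOL-Analysis.Analysis"
begin

definition grad :: "('a::real_inner \<Rightarrow> real) \<Rightarrow> 'a \<Rightarrow> 'a" where
  "grad f x = (SOME g. GDERIV f x :> g)"

definition C11_near :: "('a::euclidean_space \<Rightarrow> real) \<Rightarrow> 'a \<Rightarrow> bool" where
  "C11_near f xb \<longleftrightarrow> (\<exists>U. open U \<and> xb \<in> U \<and>
     (\<forall>x\<in>U. f differentiable (at x)) \<and>
     (\<forall>x\<in>U. \<exists>e>0. \<exists>L. L-lipschitz_on (ball x e \<inter> U) (grad f)))"

definition sdq :: "('a::real_inner \<Rightarrow> real) \<Rightarrow> 'a \<Rightarrow> 'a \<Rightarrow> real \<Rightarrow> 'a \<Rightarrow> real" where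
  "sdq f x v t w = (f (x + t *\<^sub>R w) - f x - t * inner v w) / (t\<^sup>2 / 2)"

definition second_subderiv :: "('a::real_inner \<Rightarrow> real) \<Rightarrow> 'a \<Rightarrow> 'a \<Rightarrow> 'a \<Rightarrow> ereal" where
  "second_subderiv f x v w =
     Liminf (at (0, w) within ({0<..} \<times> UNIV)) (\<lambda>(t, w'). ereal (sdq f x v t w'))"

definition twice_epi_diff :: "('a::real_inner \<Rightarrow> real) \<Rightarrow> 'a \<Rightarrow> 'a \<Rightarrow> bool" where
  "twice_epi_diff f x v \<longleftrightarrow>
     (\<forall>w. \<forall>t::nat \<Rightarrow> real. (\<forall>k. t k > 0) \<and> t \<longlonglongrightarrow> 0 \<longrightarrow>
        (\<exists>wk. wk \<longlonglongrightarrow> w \<and>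
           (\<lambda>k. ereal (sdq f x v (t k) (wk k))) \<longlonglongrightarrow> second_subderiv f x v w))"

definition tilt_argmin :: "('a::real_inner \<Rightarrow> real) \<Rightarrow> 'a \<Rightarrow> real \<Rightarrow> 'a \<Rightarrow> 'a set" where
  "tilt_argmin f xb \<gamma> v =
     {x \<in> cball xb \<gamma>. \<forall>y\<in>cball xb \<gamma>. f x - inner v x \<le> f y - inner v y}"

definition tilt_stable :: "('a::real_inner \<Rightarrow> real) \<Rightarrow> 'a \<Rightarrow> real \<Rightarrow> bool" where
  "tilt_stable f xb \<kappa> \<longleftrightarrow> (\<exists>\<gamma>>0. \<exists>\<eta>>0.
     (\<forall>v\<in>ball 0 \<eta>. \<exists>x. tilt_argmin f xb \<gamma> v = {x}) \<and>
     (\<forall>v1\<in>ball 0 \<eta>. \<forall>v2\<in>ball 0 \<eta>. \<forall>x1 x2.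
        tilt_argmin f xb \<gamma> v1 = {x1} \<and> tilt_argmin f xb \<gamma> v2 = {x2} \<longrightarrow>
        norm (x1 - x2) \<le> \<kappa> * norm (v1 - v2)) \<and>
     tilt_argmin f xb \<gamma> 0 = {xb})"

end

theory Submission
  imports Defs "HOL-Homology.Invariance_of_Domain"
begin

(* the exact-sequence arrow of HOL-Algebra clashes with the tendsto arrow *)
no_notation exact_seq_arrow
  (\<open>(\<open>indent=3 notation=\<open>mixfix exact_seq\<close>\<close>_ / \<longlongrightarrow>\<index> _)\<close> [1000, 60])

text \<open>
  Tilt stability makes the tilt-minimizer map \<open>M\<close> a \<open>\<kappa>\<close>-Lipschitz inverse of \<open>\<nabla>\<phi>\<close> near
  \<open>(0, x\<^sub>b)\<close>; by invariance of domain its image is a neighbourhood of \<open>x\<^sub>b\<close>, and since \<open>M\<close> is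
  the gradient of the convex function \<open>v \<mapsto> \<langle>v, M v\<rangle> - \<phi>(M v)\<close>, the Baillon--Haddad argument shows
  that \<open>\<nabla>\<phi>\<close> is strongly monotone with modulus \<open>1/(2\<kappa>)\<close> there. Hence \<open>\<phi>\<close> is strongly convex near
  \<open>x\<^sub>b\<close>, and every second-order difference quotient at a nearby \<open>x\<close> is strongly convex in \<open>w\<close>
  and squeezed between \<open>c\<bar>w\<bar>\<^sup>2\<close> and \<open>2L\<bar>w\<bar>\<^sup>2\<close>, \<open>L\<close> a Lipschitz constant of \<open>\<nabla>\<phi>\<close> at \<open>x\<close>. Twice
  epi-differentiability lets the strong convexity pass to the liminf, so the second subderivative
  is a finite, strongly convex function of \<open>w\<close>, and a strongly convex function plus a linear one
  has exactly one minimizer.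
\<close>

lemma has_derivative_grad:
  fixes f :: "'a::euclidean_space \<Rightarrow> real"
  assumes "f differentiable (at x)"
  shows "(f has_derivative (\<lambda>h. inner h (grad f x))) (at x)"
proof -
  obtain f' where f': "(f has_derivative f') (at x)"
    using assms by (auto simp: differentiable_def)
  have "f' = (\<lambda>h. inner h (adjoint f' 1))"
    using adjoint_works[OF has_derivative_linear[OF f'], of _ 1] by auto
  then have "GDERIV f x :> adjoint f' 1"
    using f' by (simp add: gderiv_def)
  then have "GDERIV f x :> grad f x"
    unfolding grad_def by (rule someI)
  then show ?thesis
    by (simp add: gderiv_def)
qed

lemma Liminf_le_Liminf_filterlim:
  assumes "filterlim s F G"
  shows "Liminf F f \<le> Liminf G (\<lambda>k. f (s k))"
proof -
  have "Liminf F f \<le> Liminf (filtermap s G) f"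
    using assms unfolding Liminf_def filterlim_def le_filter_def
    by (auto intro!: SUP_subset_mono)
  also have "\<dots> \<le> Liminf G (\<lambda>k. f (s k))"
    by (rule Liminf_filtermap_le)
  finally show ?thesis .
qed

lemma mean_value_inner_segment:
  fixes f :: "'a::real_inner \<Rightarrow> real"
  assumes "\<And>p. p \<in> closed_segment y z \<Longrightarrow> (f has_derivative (\<lambda>h. inner h (G p))) (at p)"
  shows "\<exists>s\<in>{0<..<1}. f z - f y = inner (z - y) (G (y + s *\<^sub>R (z - y)))"
proof -
  define F where "F s = f (y + s *\<^sub>R (z - y))" for s :: real
  have seg: "y + s *\<^sub>R (z - y) \<in> closed_segment y z" if "0 \<le> s" "s \<le> 1" for s
    unfolding closed_segment_def using that
    by (intro CollectI exI[of _ s]) (simp add: algebra_simps)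
  have "\<exists>s\<in>{0<..<1}. F 1 - F 0 = (\<lambda>t. inner (t *\<^sub>R (z - y)) (G (y + s *\<^sub>R (z - y)))) (1 - 0)"
  proof (rule mvt_simple)
    fix s :: real
    assume "0 \<le> s" "s \<le> 1"
    have "((\<lambda>s. y + s *\<^sub>R (z - y)) has_derivative (\<lambda>t. t *\<^sub>R (z - y))) (at s within {0..1})"
      by (auto intro!: derivative_eq_intros)
    from has_derivative_compose[OF this assms[OF seg[OF \<open>0 \<le> s\<close> \<open>s \<le> 1\<close>]]]
    show "(F has_derivative (\<lambda>t. inner (t *\<^sub>R (z - y)) (G (y + s *\<^sub>R (z - y))))) (at s within {0..1})"
      unfolding F_def by simp
  qed simp
  then show ?thesis
    by (simp add: F_def)
qed

definition strongly_monotone_on :: "'a::real_inner set \<Rightarrow> real \<Rightarrow> ('a \<Rightarrow> 'a) \<Rightarrow> bool" where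
  "strongly_monotone_on S c g \<longleftrightarrow> (\<forall>a\<in>S. \<forall>b\<in>S. c * (norm (a - b))\<^sup>2 \<le> inner (g a - g b) (a - b))"

lemma strongly_monotone_onD:
  "strongly_monotone_on S c g \<Longrightarrow> a \<in> S \<Longrightarrow> b \<in> S \<Longrightarrow> c * (norm (a - b))\<^sup>2 \<le> inner (g a - g b) (a - b)"
  unfolding strongly_monotone_on_def by blast

definition strongly_convex_on :: "'a::real_normed_vector set \<Rightarrow> real \<Rightarrow> ('a \<Rightarrow> real) \<Rightarrow> bool" where
  "strongly_convex_on S c f \<longleftrightarrow> (\<forall>a\<in>S. \<forall>b\<in>S. \<forall>l. 0 \<le> l \<and> l \<le> 1 \<longrightarrow>
     f (l *\<^sub>R a + (1 - l) *\<^sub>R b) \<le> l * f a + (1 - l) * f b - c/2 * l * (1 - l) * (norm (a - b))\<^sup>2)"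

lemma strongly_convex_onI:
  "(\<And>a b l. a \<in> S \<Longrightarrow> b \<in> S \<Longrightarrow> 0 \<le> l \<Longrightarrow> l \<le> 1 \<Longrightarrow>
     f (l *\<^sub>R a + (1 - l) *\<^sub>R b) \<le> l * f a + (1 - l) * f b - c/2 * l * (1 - l) * (norm (a - b))\<^sup>2)
   \<Longrightarrow> strongly_convex_on S c f"
  unfolding strongly_convex_on_def by blast

lemma strongly_convex_onD:
  "strongly_convex_on S c f \<Longrightarrow> a \<in> S \<Longrightarrow> b \<in> S \<Longrightarrow> 0 \<le> l \<Longrightarrow> l \<le> 1 \<Longrightarrow>
     f (l *\<^sub>R a + (1 - l) *\<^sub>R b) \<le> l * f a + (1 - l) * f b - c/2 * l * (1 - l) * (norm (a - b))\<^sup>2"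
  unfolding strongly_convex_on_def by blast

lemma strongly_convex_tangent_ineq:
  fixes f :: "'a::real_inner \<Rightarrow> real"
  assumes "convex S" and y: "y \<in> S" and "z \<in> S"
    and der: "\<And>p. p \<in> S \<Longrightarrow> (f has_derivative (\<lambda>h. inner h (g p))) (at p)"
    and mono: "strongly_monotone_on S c g"
  shows "f y + inner (g y) (z - y) + c/2 * (norm (z - y))\<^sup>2 \<le> f z"
proof -
  define \<psi> where "\<psi> p = f p - c/2 * inner p p" for p
  define G where "G p = g p - c *\<^sub>R p" for p
  have seg: "closed_segment y z \<subseteq> S"
    using assms by (simp add: closed_segment_subset)
  have "(\<psi> has_derivative (\<lambda>h. inner h (G p))) (at p)" if "p \<in> S" for p
  proof -
    have "((\<lambda>p. c/2 * inner p p) has_derivative (\<lambda>h. c/2 * (inner p h + inner h p))) (at p)"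
      by (intro has_derivative_mult_right has_derivative_inner has_derivative_ident)
    from has_derivative_diff[OF der[OF that] this] show ?thesis
      unfolding \<psi>_def G_def by (simp add: inner_commute[of p] algebra_simps)
  qed
  then obtain s where s: "s \<in> {0<..<1}"
    and mvt: "\<psi> z - \<psi> y = inner (z - y) (G (y + s *\<^sub>R (z - y)))"
    using mean_value_inner_segment[of y z \<psi> G] seg by blast
  define p where "p = y + s *\<^sub>R (z - y)"
  have "p \<in> closed_segment y z"
    using s unfolding p_def closed_segment_def by (auto intro!: exI[of _ s] simp: algebra_simps)
  then have "c * (norm (p - y))\<^sup>2 \<le> inner (g p - g y) (p - y)"
    using seg y by (auto intro: strongly_monotone_onD[OF mono])
  then have "0 \<le> s * inner (G p - G y) (z - y)"
    by (simp add: G_def p_def inner_diff_left power2_norm_eq_inner algebra_simps)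
  then have "0 \<le> inner (G p - G y) (z - y)"
    using s by (simp add: zero_le_mult_iff)
  then have "inner (z - y) (G y) \<le> inner (z - y) (G p)"
    by (metis diff_ge_0_iff_ge inner_commute inner_diff_left)
  with mvt have "inner (z - y) (G y) \<le> \<psi> z - \<psi> y"
    by (simp add: p_def)
  moreover have "inner (z - y) (G y) = inner (g y) (z - y) - c * inner z y + c * inner y y"
    by (simp add: G_def inner_diff_left inner_diff_right inner_commute algebra_simps)
  moreover have "c/2 * (norm (z - y))\<^sup>2 = c/2 * inner z z - c * inner z y + c/2 * inner y y"
    by (simp add: power2_norm_eq_inner inner_diff_left inner_diff_right inner_commute algebra_simps)
  ultimately show ?thesis
    unfolding \<psi>_def by linarith
qed

lemma strongly_monotone_grad_imp_strongly_convex_on: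
  fixes f :: "'a::real_inner \<Rightarrow> real"
  assumes S: "convex S"
    and der: "\<And>p. p \<in> S \<Longrightarrow> (f has_derivative (\<lambda>h. inner h (g p))) (at p)"
    and mono: "strongly_monotone_on S c g"
  shows "strongly_convex_on S c f"
proof (rule strongly_convex_onI)
  fix a b :: 'a and l :: real
  assume a: "a \<in> S" and b: "b \<in> S" and l: "0 \<le> l" "l \<le> 1"
  define m where "m = l *\<^sub>R a + (1 - l) *\<^sub>R b"
  define X where "X = inner (g m) (a - b)"
  define N where "N = (norm (a - b))\<^sup>2"
  have m: "m \<in> S"
    unfolding m_def using S a b l by (simp add: convex_def)
  have am: "a - m = (1 - l) *\<^sub>R (a - b)" and bm: "b - m = (- l) *\<^sub>R (a - b)"
    by (simp_all add: m_def algebra_simps)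
  have "f m + (1 - l) * X + c/2 * (1 - l)\<^sup>2 * N \<le> f a"
    using strongly_convex_tangent_ineq[OF S m a der mono] unfolding am X_def N_def
    by (simp add: power_mult_distrib)
  moreover have "f m - l * X + c/2 * l\<^sup>2 * N \<le> f b"
    using strongly_convex_tangent_ineq[OF S m b der mono] unfolding bm X_def N_def
    by (simp add: power_mult_distrib)
  ultimately have "l * (f m + (1 - l) * X + c/2 * (1 - l)\<^sup>2 * N) + (1 - l) * (f m - l * X + c/2 * l\<^sup>2 * N)
      \<le> l * f a + (1 - l) * f b"
    using l by (intro add_mono mult_left_mono) auto
  moreover have "l * (f m + (1 - l) * X + c/2 * (1 - l)\<^sup>2 * N) + (1 - l) * (f m - l * X + c/2 * l\<^sup>2 * N)
      = f m + c/2 * l * (1 - l) * N"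
    by (simp add: field_simps power2_eq_square)
  ultimately show "f (l *\<^sub>R a + (1 - l) *\<^sub>R b) \<le> l * f a + (1 - l) * f b - c/2 * l * (1 - l) * (norm (a - b))\<^sup>2"
    unfolding m_def N_def by linarith
qed

lemma supporting_lipschitz_map_cocoercive:
  fixes M :: "'a::real_inner \<Rightarrow> 'a" and h :: "'a \<Rightarrow> real"
  assumes \<kappa>: "\<kappa> > 0"
    and support: "\<And>a b. a \<in> ball 0 \<eta> \<Longrightarrow> b \<in> ball 0 \<eta> \<Longrightarrow> h a + inner (b - a) (M a) \<le> h b"
    and lip: "\<kappa>-lipschitz_on (ball 0 \<eta>) M"
    and u: "norm u < \<eta>/3" and v: "norm v < \<eta>/3"
  shows "(norm (M u - M v))\<^sup>2 / (2*\<kappa>) \<le> inner (M u - M v) (u - v)"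
proof -
  have M_lip: "norm (M a - M b) \<le> \<kappa> * norm (a - b)" if "a \<in> ball 0 \<eta>" "b \<in> ball 0 \<eta>" for a b
    using lipschitz_onD[OF lip that] by (simp add: dist_norm)
  have upper: "h b \<le> h a + inner (b - a) (M a) + \<kappa> * (norm (b - a))\<^sup>2"
    if ab: "a \<in> ball 0 \<eta>" "b \<in> ball 0 \<eta>" for a b
  proof -
    have "h b \<le> h a + inner (b - a) (M a) + inner (b - a) (M b - M a)"
      using support[OF ab(2,1)] by (simp add: algebra_simps)
    also have "inner (b - a) (M b - M a) \<le> norm (b - a) * norm (M b - M a)"
      by (rule norm_cauchy_schwarz)
    also have "\<dots> \<le> norm (b - a) * (\<kappa> * norm (b - a))"
      using M_lip[OF ab(2,1)] by (simp add: mult_left_mono)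
    finally show ?thesis
      by (simp add: power2_eq_square algebra_simps)
  qed
  text \<open>Compare \<open>h\<close> at \<open>q\<close> and \<open>p\<close> through the point \<open>p - (M p - M q)/(2\<kappa>)\<close>, which stays in the
    ball because \<open>\<bar>M p - M q\<bar> \<le> \<kappa>\<bar>p - q\<bar>\<close>.\<close>
  have key: "h q - inner q (M q) \<le> h p - inner p (M q) - (norm (M p - M q))\<^sup>2 / (4*\<kappa>)"
    if p: "norm p < \<eta>/3" and q: "norm q < \<eta>/3" for p q
  proof -
    define d where "d = M p - M q"
    define w where "w = p - (1 / (2*\<kappa>)) *\<^sub>R d"
    have "norm p < \<eta>" "norm q < \<eta>"
      using p q norm_ge_zero[of p] norm_ge_zero[of q] by linarith+
    then have pq: "p \<in> ball 0 \<eta>" "q \<in> ball 0 \<eta>"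
      by auto
    have "norm d \<le> \<kappa> * norm (p - q)"
      using M_lip[OF pq] by (simp add: d_def)
    also have "\<dots> \<le> \<kappa> * (norm p + norm q)"
      using \<kappa> norm_triangle_ineq4[of p q] by (intro mult_left_mono) auto
    finally have "norm d / (2*\<kappa>) \<le> (norm p + norm q) / 2"
      using \<kappa> by (simp add: divide_simps ac_simps)
    moreover have "norm w \<le> norm p + norm d / (2*\<kappa>)"
      using norm_triangle_ineq4[of p "(1 / (2*\<kappa>)) *\<^sub>R d"] \<kappa> by (simp add: w_def)
    ultimately have "norm w \<le> norm p + (norm p + norm q) / 2"
      by linarith
    then have "norm w < \<eta>"
      using p q norm_ge_zero[of p] by argo
    then have w: "w \<in> ball 0 \<eta>"
      by simp
    have "h q + inner (w - q) (M q) \<le> h w" "h w \<le> h p + inner (w - p) (M p) + \<kappa> * (norm (w - p))\<^sup>2"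
      using support[OF pq(2) w] upper[OF pq(1) w] by auto
    moreover have "inner (w - q) (M q) = inner w (M q) - inner q (M q)"
      by (simp add: inner_diff_left)
    moreover have "inner (w - p) (M p) = inner (w - p) d + inner w (M q) - inner p (M q)"
      by (simp add: d_def inner_diff_left inner_diff_right)
    ultimately have "h q - inner q (M q) \<le> h p - inner p (M q) + inner (w - p) d + \<kappa> * (norm (w - p))\<^sup>2"
      by linarith
    moreover have "inner (w - p) d = - (norm d)\<^sup>2 / (2*\<kappa>)"
      by (simp add: w_def power2_norm_eq_inner)
    moreover have "\<kappa> * (norm (w - p))\<^sup>2 = (norm d)\<^sup>2 / (4*\<kappa>)"
      using \<kappa> by (simp add: w_def power2_eq_square)
    ultimately show ?thesis
      unfolding d_def by linarith
  qed
  have "(norm (M u - M v))\<^sup>2 / (4*\<kappa>) + (norm (M v - M u))\<^sup>2 / (4*\<kappa>)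
      \<le> inner u (M u) + inner v (M v) - inner u (M v) - inner v (M u)"
    using key[OF u v] key[OF v u] by linarith
  then have "(norm (M u - M v))\<^sup>2 / (2*\<kappa>) \<le> inner u (M u) + inner v (M v) - inner u (M v) - inner v (M u)"
    unfolding norm_minus_commute[of "M v"] by simp
  also have "\<dots> = inner (M u - M v) (u - v)"
    by (simp add: inner_diff_left inner_diff_right inner_commute)
  finally show ?thesis .
qed

lemma tilt_stable_obtains_minimizer_map:
  fixes f :: "'a::real_inner \<Rightarrow> real"
  assumes "tilt_stable f xb \<kappa>" and "\<kappa> \<ge> 0"
  obtains \<gamma> \<eta> M where "\<gamma> > 0" "\<eta> > 0" "M 0 = xb"
    "\<And>v. v \<in> ball 0 \<eta> \<Longrightarrow> tilt_argmin f xb \<gamma> v = {M v}"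
    "\<kappa>-lipschitz_on (ball 0 \<eta>) M"
proof -
  obtain \<gamma> \<eta> where \<gamma>: "\<gamma> > 0" and \<eta>: "\<eta> > 0"
    and single: "\<And>v. v \<in> ball 0 \<eta> \<Longrightarrow> \<exists>x. tilt_argmin f xb \<gamma> v = {x}"
    and lip: "\<And>v1 v2 x1 x2. v1 \<in> ball 0 \<eta> \<Longrightarrow> v2 \<in> ball 0 \<eta> \<Longrightarrow>
        tilt_argmin f xb \<gamma> v1 = {x1} \<Longrightarrow> tilt_argmin f xb \<gamma> v2 = {x2} \<Longrightarrow>
        norm (x1 - x2) \<le> \<kappa> * norm (v1 - v2)"
    and at0: "tilt_argmin f xb \<gamma> 0 = {xb}"
    using assms(1) unfolding tilt_stable_def by metis
  define M where "M v = (THE y. tilt_argmin f xb \<gamma> v = {y})" for v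
  have argmin: "tilt_argmin f xb \<gamma> v = {M v}" if v: "v \<in> ball 0 \<eta>" for v
  proof -
    obtain y where y: "tilt_argmin f xb \<gamma> v = {y}"
      using single[OF v] by blast
    then have "M v = y"
      unfolding M_def by (rule the_equality) (use y in auto)
    with y show ?thesis
      by simp
  qed
  show ?thesis
  proof (rule that[OF \<gamma> \<eta> _ argmin])
    show "M 0 = xb"
      using argmin[of 0] at0 \<eta> by simp
    show "\<kappa>-lipschitz_on (ball 0 \<eta>) M"
    proof (rule lipschitz_onI)
      fix v1 v2 :: 'a
      assume "v1 \<in> ball 0 \<eta>" "v2 \<in> ball 0 \<eta>"
      from lip[OF this argmin[OF this(1)] argmin[OF this(2)]]
      show "dist (M v1) (M v2) \<le> \<kappa> * dist v1 v2"
        by (simp add: dist_norm)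
    qed (rule assms(2))
  qed
qed

lemma grad_eq_at_local_min_tilted:
  fixes f :: "'a::euclidean_space \<Rightarrow> real"
  assumes "f differentiable (at x)" and "\<forall>\<^sub>F y in at x. f x - inner u x \<le> f y - inner u y"
  shows "grad f x = u"
proof -
  have "((\<lambda>y. f y - inner u y) has_derivative (\<lambda>h. inner h (grad f x) - inner u h)) (at x)"
    by (intro has_derivative_diff has_derivative_grad assms(1) has_derivative_inner_right
        has_derivative_ident)
  from has_derivative_local_min[OF this assms(2)]
  have "inner (grad f x - u) (grad f x) - inner u (grad f x - u) = 0"
    by metis
  then have "inner (grad f x - u) (grad f x - u) = 0"
    by (simp add: inner_diff_left inner_diff_right inner_commute)
  then show ?thesis
    by simp
qed

lemma tilt_stable_obtains_grad_inverse:
  fixes f :: "'a::euclidean_space \<Rightarrow> real"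
  assumes U: "open U" "xb \<in> U" and diff: "\<And>x. x \<in> U \<Longrightarrow> f differentiable (at x)"
    and tilt: "tilt_stable f xb \<kappa>" and \<kappa>: "\<kappa> > 0"
  obtains \<eta> M where "\<eta> > 0" "M 0 = xb" "\<kappa>-lipschitz_on (ball 0 \<eta>) M"
    "\<And>v. v \<in> ball 0 \<eta> \<Longrightarrow> M v \<in> U \<and> grad f (M v) = v"
    "\<And>u v. u \<in> ball 0 \<eta> \<Longrightarrow> v \<in> ball 0 \<eta> \<Longrightarrow> f (M v) - inner v (M v) \<le> f (M u) - inner v (M u)"
proof -
  obtain \<gamma> \<eta> M where \<gamma>: "\<gamma> > 0" and \<eta>: "\<eta> > 0" and M0: "M 0 = xb"
    and argmin: "\<And>v. v \<in> ball 0 \<eta> \<Longrightarrow> tilt_argmin f xb \<gamma> v = {M v}"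
    and lipM: "\<kappa>-lipschitz_on (ball 0 \<eta>) M"
    using tilt_stable_obtains_minimizer_map[OF tilt] \<kappa> by (metis less_imp_le)
  have M_mem: "M v \<in> cball xb \<gamma>" if "v \<in> ball 0 \<eta>" for v
    using argmin[OF that] unfolding tilt_argmin_def by blast
  have M_min: "f (M v) - inner v (M v) \<le> f y - inner v y"
    if "v \<in> ball 0 \<eta>" "y \<in> cball xb \<gamma>" for v y
    using argmin[OF that(1)] that(2) unfolding tilt_argmin_def by blast
  obtain r0 where r0: "r0 > 0" "ball xb r0 \<subseteq> U"
    using U open_contains_ball by blast
  define r where "r = min r0 \<gamma>"
  have r: "r > 0" "ball xb r \<subseteq> U" "r \<le> \<gamma>"
    using r0 \<gamma> by (auto simp: r_def)
  define \<eta>' where "\<eta>' = min \<eta> (r/\<kappa>)"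
  have \<eta>': "\<eta>' > 0" "ball 0 \<eta>' \<subseteq> ball 0 \<eta>"
    using \<eta> r \<kappa> by (auto simp: \<eta>'_def)
  have M_near: "M v \<in> ball xb r" if v: "v \<in> ball 0 \<eta>'" for v
  proof -
    have "v \<in> ball 0 \<eta>" "0 \<in> ball (0::'a) \<eta>"
      using v \<eta>'(2) \<eta> by (blast, simp)
    then have "dist (M v) (M 0) \<le> \<kappa> * norm v"
      using lipschitz_onD[OF lipM] by fastforce
    also have "\<dots> < r"
      using v \<kappa> by (simp add: \<eta>'_def field_simps)
    finally show ?thesis
      by (simp add: M0 dist_commute)
  qed
  show ?thesis
  proof (rule that[OF \<eta>'(1) M0 lipschitz_on_subset[OF lipM \<eta>'(2)]])
    fix v :: 'a
    assume v: "v \<in> ball 0 \<eta>'"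
    have v_\<eta>: "v \<in> ball 0 \<eta>"
      using v \<eta>'(2) by blast
    have "\<forall>\<^sub>F y in at (M v). y \<in> ball xb r"
      by (rule eventually_at_in_open'[OF open_ball M_near[OF v]])
    then have "\<forall>\<^sub>F y in at (M v). f (M v) - inner v (M v) \<le> f y - inner v y"
      by eventually_elim (use M_min[OF v_\<eta>] r(3) in auto)
    moreover have "M v \<in> U"
      using M_near[OF v] r(2) by blast
    ultimately show "M v \<in> U \<and> grad f (M v) = v"
      using grad_eq_at_local_min_tilted diff by blast
  next
    fix u v :: 'a
    assume "u \<in> ball 0 \<eta>'" "v \<in> ball 0 \<eta>'"
    then show "f (M v) - inner v (M v) \<le> f (M u) - inner v (M u)"
      using M_min M_mem \<eta>'(2) by blast
  qed
qed

lemma tilt_stable_grad_strongly_monotone_near: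
  fixes f :: "'a::euclidean_space \<Rightarrow> real"
  assumes U: "open U" "xb \<in> U" and diff: "\<And>x. x \<in> U \<Longrightarrow> f differentiable (at x)"
    and tilt: "tilt_stable f xb \<kappa>" and \<kappa>: "\<kappa> > 0" and r: "r > 0"
  obtains \<rho> where "\<rho> > 0" "ball xb \<rho> \<subseteq> U" "\<And>x. x \<in> ball xb \<rho> \<Longrightarrow> norm (grad f x) < r"
    "strongly_monotone_on (ball xb \<rho>) (1 / (2*\<kappa>)) (grad f)"
proof -
  obtain \<eta> M where \<eta>: "\<eta> > 0" and M0: "M 0 = xb" and lipM: "\<kappa>-lipschitz_on (ball 0 \<eta>) M"
    and grad_M: "\<And>v. v \<in> ball 0 \<eta> \<Longrightarrow> M v \<in> U \<and> grad f (M v) = v"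
    and M_min: "\<And>u v. u \<in> ball 0 \<eta> \<Longrightarrow> v \<in> ball 0 \<eta> \<Longrightarrow>
      f (M v) - inner v (M v) \<le> f (M u) - inner v (M u)"
    using tilt_stable_obtains_grad_inverse[OF U _ tilt \<kappa>] diff by blast
  define \<eta>' where "\<eta>' = min (\<eta>/3) r"
  have \<eta>': "\<eta>' > 0" "ball 0 \<eta>' \<subseteq> ball 0 \<eta>"
    using \<eta> r by (auto simp: \<eta>'_def)
  have small: "norm v < \<eta>/3" "norm v < r" if "v \<in> ball 0 \<eta>'" for v :: 'a
    using that by (auto simp: \<eta>'_def)
  have "open (M ` ball 0 \<eta>')"
  proof (rule invariance_of_domain)
    show "continuous_on (ball 0 \<eta>') M"
      using lipschitz_on_continuous_on[OF lipschitz_on_subset[OF lipM \<eta>'(2)]] .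
    show "inj_on M (ball 0 \<eta>')"
    proof (rule inj_onI)
      fix u v :: 'a
      assume "u \<in> ball 0 \<eta>'" "v \<in> ball 0 \<eta>'" "M u = M v"
      then have "grad f (M u) = u" "grad f (M v) = v"
        using grad_M \<eta>'(2) by blast+
      with \<open>M u = M v\<close> show "u = v"
        by metis
    qed
  qed simp
  moreover have "xb \<in> M ` ball 0 \<eta>'"
    using M0 \<eta>'(1) by (metis centre_in_ball image_eqI)
  ultimately obtain \<rho> where \<rho>: "\<rho> > 0" "ball xb \<rho> \<subseteq> M ` ball 0 \<eta>'"
    using open_contains_ball by blast
  have preimage: "\<exists>v\<in>ball 0 \<eta>'. x = M v \<and> x \<in> U \<and> grad f x = v" if "x \<in> ball xb \<rho>" for x
    using \<rho>(2) that grad_M \<eta>'(2) by blast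
  show ?thesis
  proof (rule that[OF \<rho>(1)])
    show "ball xb \<rho> \<subseteq> U"
      using preimage by blast
    show "norm (grad f x) < r" if "x \<in> ball xb \<rho>" for x
      using preimage[OF that] small(2) by force
    show "strongly_monotone_on (ball xb \<rho>) (1 / (2*\<kappa>)) (grad f)"
      unfolding strongly_monotone_on_def
    proof (intro ballI)
      fix a b :: 'a
      assume "a \<in> ball xb \<rho>" "b \<in> ball xb \<rho>"
      then obtain u v where u: "u \<in> ball 0 \<eta>'" "a = M u" "grad f a = u"
        and v: "v \<in> ball 0 \<eta>'" "b = M v" "grad f b = v"
        using preimage by metis
      text \<open>\<open>M\<close> supports the convex function \<open>v \<mapsto> \<langle>v, M v\<rangle> - f (M v)\<close>.\<close>
      have "(norm (M u - M v))\<^sup>2 / (2*\<kappa>) \<le> inner (M u - M v) (u - v)"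
      proof (rule supporting_lipschitz_map_cocoercive[OF \<kappa> _ lipM small(1)[OF u(1)] small(1)[OF v(1)]])
        fix c d :: 'a
        assume "c \<in> ball 0 \<eta>" "d \<in> ball 0 \<eta>"
        then show "inner c (M c) - f (M c) + inner (d - c) (M c) \<le> inner d (M d) - f (M d)"
          using M_min[of c d] by (simp add: inner_diff_left)
      qed
      then show "1 / (2*\<kappa>) * (norm (a - b))\<^sup>2 \<le> inner (grad f a - grad f b) (a - b)"
        using u v by (simp add: inner_commute)
    qed
  qed
qed

abbreviation second_subderiv_filter :: "'a::real_normed_vector \<Rightarrow> (real \<times> 'a) filter" where
  "second_subderiv_filter w \<equiv> at (0, w) within ({0<..} \<times> UNIV)"

lemma second_subderiv_eq_Liminf:
  "second_subderiv f x v w = Liminf (second_subderiv_filter w) (\<lambda>p. ereal (sdq f x v (fst p) (snd p)))"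
  unfolding second_subderiv_def by (simp add: case_prod_beta')

lemma filterlim_second_subderiv_filter:
  assumes "\<And>k. t k > 0" "t \<longlonglongrightarrow> 0" "w' \<longlonglongrightarrow> w"
  shows "filterlim (\<lambda>k. (t k, w' k)) (second_subderiv_filter w) sequentially"
  unfolding filterlim_at using assms
  by (auto intro!: tendsto_Pair always_eventually simp: order_less_imp_not_eq2)

lemma second_subderiv_filter_ne_bot: "second_subderiv_filter w \<noteq> bot"
proof
  assume bot: "second_subderiv_filter w = bot"
  have "filterlim (\<lambda>k. (inverse (real (Suc k)), w)) (second_subderiv_filter w) sequentially"
    by (rule filterlim_second_subderiv_filter[OF _ LIMSEQ_inverse_real_of_nat]) auto
  then show False
    unfolding bot filterlim_def by (simp add: bot_unique filtermap_bot_iff)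
qed

lemma tendsto_second_subderiv_filter:
  "(fst \<longlongrightarrow> 0) (second_subderiv_filter w)" "(snd \<longlongrightarrow> w) (second_subderiv_filter w)"
  using tendsto_fst[OF tendsto_ident_at] tendsto_snd[OF tendsto_ident_at] by fastforce+

lemma eventually_second_subderiv_filter_small_step:
  assumes "open S" "x \<in> S" "e > 0"
  shows "\<forall>\<^sub>F p in second_subderiv_filter w. 0 < fst p \<and> x + fst p *\<^sub>R snd p \<in> S \<and> fst p * norm (snd p) < e"
proof -
  note t = tendsto_second_subderiv_filter(1) and w = tendsto_second_subderiv_filter(2)
  have "((\<lambda>p. x + fst p *\<^sub>R snd p) \<longlongrightarrow> x + 0 *\<^sub>R w) (second_subderiv_filter w)"
    by (intro tendsto_intros t w)
  then have "\<forall>\<^sub>F p in second_subderiv_filter w. x + fst p *\<^sub>R snd p \<in> S"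
    using assms(1,2) by (simp add: tendsto_def)
  moreover have "((\<lambda>p. fst p * norm (snd p)) \<longlongrightarrow> 0 * norm w) (second_subderiv_filter w)"
    by (intro tendsto_intros t w)
  then have "\<forall>\<^sub>F p in second_subderiv_filter w. fst p * norm (snd p) < e"
    using assms(3) by (simp add: order_tendstoD(2))
  moreover have "\<forall>\<^sub>F p in second_subderiv_filter w. 0 < fst p"
    by (auto simp: eventually_at_filter intro!: always_eventually)
  ultimately show ?thesis
    by eventually_elim auto
qed

locale strongly_convex_near =
  fixes f :: "'a::real_inner \<Rightarrow> real" and g :: "'a \<Rightarrow> 'a" and S x c L e
  assumes open_S: "open S" and convex_S: "convex S" and x: "x \<in> S"
    and has_derivative_g: "\<And>p. p \<in> S \<Longrightarrow> (f has_derivative (\<lambda>h. inner h (g p))) (at p)"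
    and strongly_monotone: "strongly_monotone_on S c g" and c: "c > 0"
    and e: "e > 0" and lipschitz: "L-lipschitz_on (ball x e \<inter> S) g"
begin

abbreviation Q :: "real \<Rightarrow> 'a \<Rightarrow> real" where
  "Q \<equiv> sdq f x (g x)"

lemma sdq_ge:
  assumes t: "t > 0" and w: "x + t *\<^sub>R w \<in> S"
  shows "c * (norm w)\<^sup>2 \<le> Q t w"
proof -
  have "f x + inner (g x) (t *\<^sub>R w) + c/2 * (norm (t *\<^sub>R w))\<^sup>2 \<le> f (x + t *\<^sub>R w)"
    using strongly_convex_tangent_ineq[OF convex_S x w has_derivative_g strongly_monotone] by simp
  then have "c * (norm w)\<^sup>2 * (t\<^sup>2 / 2) \<le> f (x + t *\<^sub>R w) - f x - t * inner (g x) w"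
    using t by (simp add: algebra_simps)
  then show ?thesis
    unfolding sdq_def using t by (simp add: pos_le_divide_eq)
qed

lemma sdq_le:
  assumes t: "t > 0" and w: "x + t *\<^sub>R w \<in> S" and small: "t * norm w < e"
  shows "Q t w \<le> 2 * L * (norm w)\<^sup>2"
proof -
  have seg: "closed_segment x (x + t *\<^sub>R w) \<subseteq> S"
    using convex_S x w by (simp add: closed_segment_subset)
  then obtain s where s: "s \<in> {0<..<1}"
    and mvt: "f (x + t *\<^sub>R w) - f x = inner ((x + t *\<^sub>R w) - x) (g (x + s *\<^sub>R ((x + t *\<^sub>R w) - x)))"
    using mean_value_inner_segment[of x "x + t *\<^sub>R w" f g] has_derivative_g by blast
  define p where "p = x + (s * t) *\<^sub>R w"
  have "p \<in> closed_segment x (x + t *\<^sub>R w)"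
    using s t unfolding p_def closed_segment_def by (auto intro!: exI[of _ s] simp: algebra_simps)
  moreover have p_x: "norm (p - x) = s * t * norm w"
    using s t by (simp add: p_def)
  moreover have st: "s * t * norm w \<le> t * norm w"
    using s t by (simp add: mult_right_mono)
  ultimately have "p \<in> ball x e \<inter> S"
    using seg small by (auto simp: dist_norm norm_minus_commute)
  then have "norm (g p - g x) \<le> L * (s * t * norm w)"
    using lipschitz_onD[OF lipschitz, of p x] x e p_x by (simp add: dist_norm)
  also have "\<dots> \<le> L * (t * norm w)"
    by (rule mult_left_mono[OF st lipschitz_on_nonneg[OF lipschitz]])
  finally have "inner w (g p - g x) \<le> norm w * (L * (t * norm w))"
    using norm_cauchy_schwarz[of w "g p - g x"] by (meson mult_left_mono norm_ge_zero order_trans)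
  then have "t * inner w (g p - g x) \<le> t * (norm w * (L * (t * norm w)))"
    using t by simp
  also have "\<dots> = (2 * L * (norm w)\<^sup>2) * (t\<^sup>2 / 2)"
    by (simp add: power2_eq_square)
  moreover have "f (x + t *\<^sub>R w) - f x - t * inner (g x) w = t * inner w (g p - g x)"
    using mvt by (simp add: p_def inner_diff_right inner_commute algebra_simps)
  ultimately have "f (x + t *\<^sub>R w) - f x - t * inner (g x) w \<le> (2 * L * (norm w)\<^sup>2) * (t\<^sup>2 / 2)"
    by simp
  then show ?thesis
    unfolding sdq_def using t by (simp add: pos_divide_le_eq)
qed

lemma sdq_strongly_convex_on:
  assumes t: "t > 0"
  shows "strongly_convex_on {w. x + t *\<^sub>R w \<in> S} (2 * c) (Q t)"
proof (rule strongly_convex_onI)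
  fix a b :: 'a and l :: real
  assume "a \<in> {w. x + t *\<^sub>R w \<in> S}" "b \<in> {w. x + t *\<^sub>R w \<in> S}" and l: "0 \<le> l" "l \<le> 1"
  then have a: "x + t *\<^sub>R a \<in> S" and b: "x + t *\<^sub>R b \<in> S"
    by auto
  define m where "m = l *\<^sub>R a + (1 - l) *\<^sub>R b"
  define D where "D v = f (x + t *\<^sub>R v) - f x - t * inner (g x) v" for v
  have Q_D: "Q t v = D v / (t\<^sup>2 / 2)" for v
    by (simp add: sdq_def D_def)
  have "l *\<^sub>R (x + t *\<^sub>R a) + (1 - l) *\<^sub>R (x + t *\<^sub>R b) = x + t *\<^sub>R m"
    by (simp add: m_def algebra_simps)
  moreover have "(norm ((x + t *\<^sub>R a) - (x + t *\<^sub>R b)))\<^sup>2 = t\<^sup>2 * (norm (a - b))\<^sup>2"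
    using t by (simp add: power_mult_distrib flip: scaleR_diff_right)
  ultimately have "f (x + t *\<^sub>R m) \<le> l * f (x + t *\<^sub>R a) + (1 - l) * f (x + t *\<^sub>R b)
      - c/2 * l * (1 - l) * (t\<^sup>2 * (norm (a - b))\<^sup>2)"
    using strongly_convex_onD[OF strongly_monotone_grad_imp_strongly_convex_on[OF convex_S
        has_derivative_g strongly_monotone] a b l] by simp
  moreover have "t * inner (g x) m = l * (t * inner (g x) a) + (1 - l) * (t * inner (g x) b)"
    by (simp add: m_def algebra_simps)
  ultimately have "D m \<le> l * D a + (1 - l) * D b - c/2 * l * (1 - l) * (t\<^sup>2 * (norm (a - b))\<^sup>2)"
    by (simp add: D_def algebra_simps)
  then have "D m / (t\<^sup>2 / 2) \<le> (l * D a + (1 - l) * D b - c/2 * l * (1 - l) * (t\<^sup>2 * (norm (a - b))\<^sup>2)) / (t\<^sup>2 / 2)"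
    by (rule divide_right_mono) simp
  also have "\<dots> = l * (D a / (t\<^sup>2 / 2)) + (1 - l) * (D b / (t\<^sup>2 / 2)) - (2 * c)/2 * l * (1 - l) * (norm (a - b))\<^sup>2"
    using t by (simp add: field_simps)
  finally show "Q t (l *\<^sub>R a + (1 - l) *\<^sub>R b) \<le> l * Q t a + (1 - l) * Q t b - (2 * c)/2 * l * (1 - l) * (norm (a - b))\<^sup>2"
    unfolding Q_D m_def .
qed

lemma second_subderiv_ge: "ereal (c * (norm w)\<^sup>2) \<le> second_subderiv f x (g x) w"
proof -
  have "((\<lambda>p. ereal (c * (norm (snd p))\<^sup>2)) \<longlongrightarrow> ereal (c * (norm w)\<^sup>2)) (second_subderiv_filter w)"
    unfolding lim_ereal by (intro tendsto_intros tendsto_second_subderiv_filter)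
  then have "Liminf (second_subderiv_filter w) (\<lambda>p. ereal (c * (norm (snd p))\<^sup>2)) = ereal (c * (norm w)\<^sup>2)"
    by (intro lim_imp_Liminf second_subderiv_filter_ne_bot)
  moreover have "Liminf (second_subderiv_filter w) (\<lambda>p. ereal (c * (norm (snd p))\<^sup>2))
      \<le> Liminf (second_subderiv_filter w) (\<lambda>p. ereal (Q (fst p) (snd p)))"
    using eventually_second_subderiv_filter_small_step[OF open_S x e]
    by (rule Liminf_mono[OF eventually_mono]) (auto intro: sdq_ge)
  ultimately show ?thesis
    by (simp add: second_subderiv_eq_Liminf)
qed

lemma second_subderiv_le: "second_subderiv f x (g x) w \<le> ereal (2 * L * (norm w)\<^sup>2)"
proof -
  have "((\<lambda>p. ereal (2 * L * (norm (snd p))\<^sup>2)) \<longlongrightarrow> ereal (2 * L * (norm w)\<^sup>2)) (second_subderiv_filter w)"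
    unfolding lim_ereal by (intro tendsto_intros tendsto_second_subderiv_filter)
  then have "Liminf (second_subderiv_filter w) (\<lambda>p. ereal (2 * L * (norm (snd p))\<^sup>2)) = ereal (2 * L * (norm w)\<^sup>2)"
    by (intro lim_imp_Liminf second_subderiv_filter_ne_bot)
  moreover have "Liminf (second_subderiv_filter w) (\<lambda>p. ereal (Q (fst p) (snd p)))
      \<le> Liminf (second_subderiv_filter w) (\<lambda>p. ereal (2 * L * (norm (snd p))\<^sup>2))"
    using eventually_second_subderiv_filter_small_step[OF open_S x e]
    by (rule Liminf_mono[OF eventually_mono]) (auto intro: sdq_le)
  ultimately show ?thesis
    by (simp add: second_subderiv_eq_Liminf)
qed

definition d2 :: "'a \<Rightarrow> real" where
  "d2 w = real_of_ereal (second_subderiv f x (g x) w)"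

lemma second_subderiv_eq_d2: "second_subderiv f x (g x) w = ereal (d2 w)"
  using second_subderiv_ge[of w] second_subderiv_le[of w] unfolding d2_def
  by (cases "second_subderiv f x (g x) w") auto

lemma d2_ge: "c * (norm w)\<^sup>2 \<le> d2 w"
  using second_subderiv_ge[of w] by (simp add: second_subderiv_eq_d2)

lemma d2_zero: "d2 0 = 0"
  using second_subderiv_le[of 0] d2_ge[of 0] by (simp add: second_subderiv_eq_d2)

end

lemma strongly_convex_on_imp_convex_on:
  assumes "convex S" and convex: "strongly_convex_on S c f" and "c \<ge> 0"
  shows "convex_on S f"
proof (rule convex_onI)
  fix t :: real and a a'
  assume t: "0 < t" "t < 1" and "a \<in> S" "a' \<in> S"
  then have "f ((1 - t) *\<^sub>R a + (1 - (1 - t)) *\<^sub>R a')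
      \<le> (1 - t) * f a + (1 - (1 - t)) * f a' - c/2 * (1 - t) * (1 - (1 - t)) * (norm (a - a'))\<^sup>2"
    by (intro strongly_convex_onD[OF convex]) auto
  moreover have "0 \<le> c/2 * (1 - t) * (1 - (1 - t)) * (norm (a - a'))\<^sup>2"
    using \<open>c \<ge> 0\<close> t by simp
  ultimately show "f ((1 - t) *\<^sub>R a + t *\<^sub>R a') \<le> (1 - t) * f a + t * f a'"
    by simp
qed (fact assms(1))

lemma strongly_convex_linear_unique_minimizer:
  fixes D :: "'a::euclidean_space \<Rightarrow> real"
  assumes convex: "strongly_convex_on UNIV c D" and c: "c > 0"
    and coercive: "\<And>w. b * (norm w)\<^sup>2 \<le> D w" and b: "b > 0" and D0: "D 0 = 0"
  shows "\<exists>!w. \<forall>w'. inner v w + D w / 2 \<le> inner v w' + D w' / 2"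
proof -
  define G where "G w = inner v w + D w / 2" for w
  have "convex_on UNIV D"
    using strongly_convex_on_imp_convex_on[OF convex_UNIV convex] c by simp
  then have "continuous_on UNIV G"
    unfolding G_def by (intro continuous_intros convex_on_continuous) auto
  define R where "R = 2 * norm v / b + 1"
  have R: "R > 0"
    using b by (simp add: R_def add_nonneg_pos)
  have "cball 0 R \<noteq> {}"
    using R by simp
  from continuous_attains_inf[OF compact_cball this continuous_on_subset[OF \<open>continuous_on UNIV G\<close>]]
  obtain w0 where w0_min: "\<And>w. w \<in> cball 0 R \<Longrightarrow> G w0 \<le> G w"
    by blast
  have G_outside: "0 < G w" if "w \<notin> cball 0 R" for w
  proof -
    have "norm v < b/2 * norm w"
      using that b by (simp add: R_def field_simps)
    then have "norm v * norm w < b/2 * norm w * norm w"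
      by (rule mult_strict_right_mono) (use that R in auto)
    then have "norm v * norm w < b/2 * (norm w)\<^sup>2"
      by (simp add: power2_eq_square)
    moreover have "- (norm v * norm w) \<le> inner v w"
      using norm_cauchy_schwarz[of "-v" w] by simp
    ultimately show ?thesis
      using coercive[of w] by (simp add: G_def)
  qed
  have minimizer: "G w0 \<le> G w" for w
    using w0_min[of w] w0_min[of 0] G_outside[of w] R D0 by (force simp: G_def)
  have unique: "w1 = w2" if "\<forall>w. G w1 \<le> G w" "\<forall>w. G w2 \<le> G w" for w1 w2
  proof (rule ccontr)
    assume "w1 \<noteq> w2"
    define m where "m = (1/2) *\<^sub>R w1 + (1 - 1/2) *\<^sub>R w2"
    have "D m \<le> (1/2) * D w1 + (1 - 1/2) * D w2 - c/2 * (1/2) * (1 - 1/2) * (norm (w1 - w2))\<^sup>2"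
      unfolding m_def by (rule strongly_convex_onD[OF convex]) auto
    moreover have "inner v m = (1/2) * inner v w1 + (1/2) * inner v w2"
      by (simp add: m_def inner_add_right)
    moreover have "0 < c * (norm (w1 - w2))\<^sup>2"
      using \<open>w1 \<noteq> w2\<close> c by simp
    moreover have "G w1 = G w2"
      using that by (meson order_antisym)
    ultimately have "G m < G w1"
      unfolding G_def by (simp add: field_simps)
    with that(1) show False
      by (meson not_le)
  qed
  show ?thesis
    unfolding G_def[symmetric] using minimizer unique by blast
qed

locale strongly_convex_twice_epi_diff = strongly_convex_near f g S x c L e
  for f :: "'a::euclidean_space \<Rightarrow> real" and g S x c L e +
  assumes twice_epi_diff: "twice_epi_diff f x (g x)"
begin

lemma d2_strongly_convex_on: "strongly_convex_on UNIV (2 * c) d2"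
proof (rule strongly_convex_onI)
  fix a b :: 'a and l :: real
  assume l: "0 \<le> l" "l \<le> 1"
  define t :: "nat \<Rightarrow> real" where "t k = inverse (real (Suc k))" for k
  have t: "\<And>k. t k > 0" "t \<longlonglongrightarrow> 0"
    unfolding t_def by (simp, rule LIMSEQ_inverse_real_of_nat)
  text \<open>Recovery sequences for \<open>a\<close> and \<open>b\<close> along the same \<open>t\<close>; their convex combination is
    admissible for the liminf defining the second subderivative at the convex combination.\<close>
  obtain as where as: "as \<longlonglongrightarrow> a" "(\<lambda>k. Q (t k) (as k)) \<longlonglongrightarrow> d2 a"
    using twice_epi_diff t unfolding twice_epi_diff_def second_subderiv_eq_d2 lim_ereal by blast
  obtain bs where bs: "bs \<longlonglongrightarrow> b" "(\<lambda>k. Q (t k) (bs k)) \<longlonglongrightarrow> d2 b"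
    using twice_epi_diff t unfolding twice_epi_diff_def second_subderiv_eq_d2 lim_ereal by blast
  define ms where "ms k = l *\<^sub>R as k + (1 - l) *\<^sub>R bs k" for k
  define R where "R k = l * Q (t k) (as k) + (1 - l) * Q (t k) (bs k)
    - (2 * c)/2 * l * (1 - l) * (norm (as k - bs k))\<^sup>2" for k
  have admissible: "\<forall>\<^sub>F k in sequentially. x + t k *\<^sub>R ws k \<in> S" if "ws \<longlonglongrightarrow> w" for ws w
    using filterlim_second_subderiv_filter[OF t that, unfolded filterlim_iff, rule_format,
        OF eventually_second_subderiv_filter_small_step[OF open_S x e]]
    by (rule eventually_mono) simp
  have "ms \<longlonglongrightarrow> l *\<^sub>R a + (1 - l) *\<^sub>R b"
    unfolding ms_def by (intro tendsto_intros as bs)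
  from Liminf_le_Liminf_filterlim[OF filterlim_second_subderiv_filter[OF t this],
      of "\<lambda>p. ereal (Q (fst p) (snd p))"]
  have "ereal (d2 (l *\<^sub>R a + (1 - l) *\<^sub>R b)) \<le> Liminf sequentially (\<lambda>k. ereal (Q (t k) (ms k)))"
    by (simp add: second_subderiv_eq_Liminf flip: second_subderiv_eq_d2)
  also have "\<dots> \<le> Liminf sequentially (\<lambda>k. ereal (R k))"
  proof (rule Liminf_mono)
    show "\<forall>\<^sub>F k in sequentially. ereal (Q (t k) (ms k)) \<le> ereal (R k)"
      using admissible[OF as(1)] admissible[OF bs(1)]
    proof eventually_elim
      case (elim k)
      then show ?case
        using strongly_convex_onD[OF sdq_strongly_convex_on[OF t(1)], where a = "as k" and b = "bs k"] l
        by (simp add: ms_def R_def)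
    qed
  qed
  also have "\<dots> = ereal (l * d2 a + (1 - l) * d2 b - (2 * c)/2 * l * (1 - l) * (norm (a - b))\<^sup>2)"
    unfolding R_def by (intro lim_imp_Liminf tendsto_intros as bs) simp
  finally show "d2 (l *\<^sub>R a + (1 - l) *\<^sub>R b) \<le> l * d2 a + (1 - l) * d2 b - (2 * c)/2 * l * (1 - l) * (norm (a - b))\<^sup>2"
    by simp
qed

lemma unique_minimizer:
  "\<exists>!w. \<forall>w'. ereal (f x + inner (g x) w) + ereal (1/2) * second_subderiv f x (g x) w
      \<le> ereal (f x + inner (g x) w') + ereal (1/2) * second_subderiv f x (g x) w'"
proof -
  have "\<exists>!w. \<forall>w'. inner (g x) w + d2 w / 2 \<le> inner (g x) w' + d2 w' / 2"
    using d2_strongly_convex_on d2_ge c d2_zero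
    by (intro strongly_convex_linear_unique_minimizer[where c = "2 * c" and b = c]) auto
  then show ?thesis
    by (simp add: second_subderiv_eq_d2)
qed

end

lemma grad_quadratic_model_unique_minimizer:
  fixes f :: "'a::euclidean_space \<Rightarrow> real"
  assumes "open S" "convex S" "x \<in> S" "\<And>p. p \<in> S \<Longrightarrow> f differentiable (at p)"
    and "strongly_monotone_on S c (grad f)" "c > 0"
    and "e > 0" "L-lipschitz_on (ball x e \<inter> S) (grad f)"
    and "twice_epi_diff f x (grad f x)"
  shows "\<exists>!w. \<forall>w'. ereal (f x + inner (grad f x) w) + ereal (1/2) * second_subderiv f x (grad f x) w
      \<le> ereal (f x + inner (grad f x) w') + ereal (1/2) * second_subderiv f x (grad f x) w'"
proof -
  interpret strongly_convex_twice_epi_diff f "grad f" S x c L e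
    using assms(1-3,5-9) by unfold_locales (simp_all add: has_derivative_grad assms(4))
  show ?thesis
    by (rule unique_minimizer)
qed

lemma mem_cball_Pair_half:
  fixes x xb :: "'a::metric_space" and v :: "'b::real_normed_vector"
  assumes "dist xb x < \<delta>/2" "norm v < \<delta>/2"
  shows "(x, v) \<in> cball (xb, 0) \<delta>"
  using assms sqrt_sum_squares_le_sum[of "dist xb x" "dist 0 v"] by (simp add: dist_Pair_Pair)

theorem theorem5p3:
  fixes \<phi> :: "real ^ 'n \<Rightarrow> real" and xb :: "real ^ 'n" and \<kappa> \<delta> :: real
  assumes "C11_near \<phi> xb"
    and "\<kappa> > 0"
    and "tilt_stable \<phi> xb \<kappa>"
    and "\<delta> > 0"
    and "\<forall>x. \<phi> differentiable (at x) \<and> (x, grad \<phi> x) \<in> cball (xb, 0) \<delta> \<longrightarrow>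
           twice_epi_diff \<phi> x (grad \<phi> x)"
  shows "\<exists>\<epsilon>>0. \<forall>x\<in>ball xb \<epsilon>. \<exists>!w. \<forall>w'.
           ereal (\<phi> x + inner (grad \<phi> x) w) + ereal (1/2) * second_subderiv \<phi> x (grad \<phi> x) w
         \<le> ereal (\<phi> x + inner (grad \<phi> x) w') + ereal (1/2) * second_subderiv \<phi> x (grad \<phi> x) w'"
proof -
  obtain U where U: "open U" "xb \<in> U" and diff: "\<And>x. x \<in> U \<Longrightarrow> \<phi> differentiable (at x)"
    and lip: "\<And>x. x \<in> U \<Longrightarrow> \<exists>e>0. \<exists>L. L-lipschitz_on (ball x e \<inter> U) (grad \<phi>)"
    using assms(1) unfolding C11_near_def by blast
  obtain \<rho> where \<rho>: "\<rho> > 0" "ball xb \<rho> \<subseteq> U" and grad_small: "\<And>x. x \<in> ball xb \<rho> \<Longrightarrow> norm (grad \<phi> x) < \<delta>/2"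
    and mono: "strongly_monotone_on (ball xb \<rho>) (1 / (2*\<kappa>)) (grad \<phi>)"
    using tilt_stable_grad_strongly_monotone_near[OF U diff assms(3,2), of "\<delta>/2"] assms(4) by auto
  have "\<exists>!w. \<forall>w'. ereal (\<phi> x + inner (grad \<phi> x) w) + ereal (1/2) * second_subderiv \<phi> x (grad \<phi> x) w
      \<le> ereal (\<phi> x + inner (grad \<phi> x) w') + ereal (1/2) * second_subderiv \<phi> x (grad \<phi> x) w'"
    if x: "x \<in> ball xb (min \<rho> (\<delta>/2))" for x
  proof -
    have x_\<rho>: "x \<in> ball xb \<rho>"
      using x by simp
    obtain e L where e: "e > 0" and L: "L-lipschitz_on (ball x e \<inter> U) (grad \<phi>)"
      using lip \<rho>(2) x_\<rho> by blast
    have "(x, grad \<phi> x) \<in> cball (xb, 0) \<delta>"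
      using x grad_small[OF x_\<rho>] by (intro mem_cball_Pair_half) auto
    then have "twice_epi_diff \<phi> x (grad \<phi> x)"
      using assms(5) diff \<rho>(2) x_\<rho> by blast
    then show ?thesis
      using diff \<rho>(2) assms(2)
      by (intro grad_quadratic_model_unique_minimizer[OF open_ball convex_ball x_\<rho> _ mono _ e
            lipschitz_on_subset[OF L]]) auto
  qed
  then show ?thesis
    using \<rho>(1) assms(4) by (intro exI[of _ "min \<rho> (\<delta>/2)"]) auto
qed

end
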